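(* Let robots $i$ and $j$ be neighbors. Let $\Theta_{ij}\in\mathbb{R}^7$ be the unknown constant parameter vector described in the context, and let the estimate $\hat\Theta_{ij}$ be generated by the concurrent-learning update described in the context, starting from an arbitrary initial estimate $\hat\Theta_{ij}(t_0)\in\mathbb{R}^7$. Assume that the recorded data matrix $S_{ij}=\mathbf{R}_{ij}\mathbf{R}_{ij}^T\in\mathbb{R}^{7\times 7}$ is full rank. Then the estimation error $\tilde\Theta_{ij}(t_k)=\hat\Theta_{ij}(t_k)-\Theta_{ij}$ is globally exponentially stable: there exist constants $c\ge 1$ and $\rho\in(0,1)$, independent of $\hat\Theta_{ij}(t_0)$, such that $\|\tilde\Theta_{ij}(t_k)\|\le c\,\rho^k\|\tilde\Theta_{ij}(t_0)\|$ for all $k\in\mathbb{N}$.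
   Context: Setting: nonholonomic robots, each with its own odometry frame $\mathcal{O}_i$ (with $x$-axis equal to the robot's initial heading), moving with 4-DoF kinematics (planar position, height, yaw). At sampling instants $t_k=k\Delta t$, $k\in\mathbb{N}$, robot $i$ measures with UWB the distance $d_{ij}(t_k)=\|\mathbf{p}^{\mathcal{O}_i}_i(t_k)-\mathbf{p}^{\mathcal{O}_i}_j(t_k)\|$ to its neighbor $j$, and both robots know their own inertial-odometry displacements $\mathbf{p}^{\mathcal{O}_i}_i(t_k)$, $\mathbf{p}^{\mathcal{O}_j}_j(t_k)$ (exchanged by communication). Using the cosine theorem on two consecutive samples, these measurements yield at each $t_k$ a scalar $y_{ij}(t_k)$ and a unit vector $\Phi_{ij}(t_k)=\Psi_{ij}(t_k)/\|\Psi_{ij}(t_k)\|\in\mathbb{R}^7$ (with $\Psi_{ij}(t_k)\neq 0$ a vector computed from the measured displacements) satisfying the linear regression $y_{ij}(t_k)=\Theta_{ij}^T\Phi_{ij}(t_k)$, where $\Theta_{ij}\in\mathbb{R}^7$ is a constant unknown vector whose first three entries are the initial relative position $\mathbf{p}^{\mathcal{O}_i}_{ij}(t_0)$ of the robots in frame $\mathcal{O}_i$ and whose 6th and 7th entries are $\cos\theta$ and $\sin\theta$, $\theta$ being the initial relative yaw between frames $\mathcal{O}_j$ and $\mathcal{O}_i$. Recorded data: a finite set of previously sampled unit regressors $\Phi_{ij}(s_1),\dots,\Phi_{ij}(s_\varsigma)$ with corresponding outputs $y_{ij}(s_m)=\Theta_{ij}^T\Phi_{ij}(s_m)$; $\mathbf{R}_{ij}=[\Phi_{ij}(s_1),\dots,\Phi_{ij}(s_\varsigma)]$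 and $S_{ij}=\mathbf{R}_{ij}\mathbf{R}_{ij}^T$. Also $U_{ij}(t_k)=\Phi_{ij}(t_k)\Phi_{ij}(t_k)^T$. Estimator: $\hat\Theta_{ij}(t)=\hat\Theta_{ij}(t_k)$ for $t_k<t\le t_{k+1}$ and $\hat\Theta_{ij}(t_{k+1})=\hat\Theta_{ij}(t_k)-\eta\sum_{m=1}^{\varsigma}\Phi_{ij}(s_m)\epsilon_{ij}(s_m)-\eta\,\Phi_{ij}(t_k)\epsilon_{ij}(t_k)$, where the innovations are $\epsilon_{ij}(s)=\hat\Theta_{ij}(t_k)^T\Phi_{ij}(s)-y_{ij}(s)$ and the learning rate is $\eta=\dfrac{\lambda_{\min}(S_{ij})}{\lambda_{\max}(U_{ij}(t_k))+\lambda_{\max}(S_{ij})^2}$ ($\lambda_{\min},\lambda_{\max}$ denote smallest/largest eigenvalues). *)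

theory Defs
  imports "HOL-Analysis.Analysis"
begin

definition outer :: "real^'n \<Rightarrow> real^'n \<Rightarrow> real^'n^'n" where
  "outer u v = (\<chi> i j. u $ i * v $ j)"

text \<open>Real eigenvalues of a square matrix (all eigenvalues are real for the symmetric
  matrices used here).\<close>
definition real_eigenvalues :: "real^'n^'n \<Rightarrow> real set" where
  "real_eigenvalues A = {l. \<exists>v. v \<noteq> 0 \<and> A *v v = l *\<^sub>R v}"

definition lambda_min :: "real^'n^'n \<Rightarrow> real" where
  "lambda_min A = Min (real_eigenvalues A)"

definition lambda_max :: "real^'n^'n \<Rightarrow> real" where
  "lambda_max A = Max (real_eigenvalues A)"

text \<open>Recorded-data matrix S = R R^T = sum over recorded unit regressors Phi(s_m), m = 1..sigma.\<close>
definition data_matrix :: "(nat \<Rightarrow> real^'n) \<Rightarrow> nat \<Rightarrow> real^'n^'n" where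
  "data_matrix Phir \<sigma> = (\<Sum>m = 1..\<sigma>. outer (Phir m) (Phir m))"

definition learning_rate :: "real^'n^'n \<Rightarrow> real^'n \<Rightarrow> real" where
  "learning_rate S phi = lambda_min S / (lambda_max (outer phi phi) + (lambda_max S)^2)"

definition cl_step :: "(nat \<Rightarrow> real^'n) \<Rightarrow> (nat \<Rightarrow> real) \<Rightarrow> nat \<Rightarrow> real^'n \<Rightarrow> real \<Rightarrow> real^'n \<Rightarrow> real^'n" where
  "cl_step Phir yr \<sigma> phi y Th =
     (let \<eta> = learning_rate (data_matrix Phir \<sigma>) phi in
      Th - \<eta> *\<^sub>R (\<Sum>m = 1..\<sigma>. (Th \<bullet> Phir m - yr m) *\<^sub>R Phir m)
         - \<eta> *\<^sub>R ((Th \<bullet> phi - y) *\<^sub>R phi))"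

end

theory Submission
  imports Defs
begin

text \<open>Because the recorded and current outputs are exact, the estimation error \<open>e\<close>
  evolves by \<open>e \<mapsto> (I - \<eta> (S + \<phi> \<phi>\<^sup>T)) e\<close>. This map is self-adjoint and, writing
  \<open>a, b\<close> for the extreme eigenvalues of \<open>S\<close>, its quadratic form lies between
  \<open>(1 - \<eta> (b + 1)) |e|\<^sup>2\<close> and \<open>(1 - \<eta> a) |e|\<^sup>2\<close>, because \<open>\<phi> \<phi>\<^sup>T\<close> has
  eigenvalues in \<open>[0, 1]\<close>. Hence it contracts by \<open>\<rho> = max (1 - \<eta> a) (\<eta> (b + 1) - 1)\<close>.
  Full rank makes \<open>a > 0\<close>, and the learning rate \<open>\<eta> = a / (1 + b\<^sup>2)\<close> then gives
  \<open>0 < \<rho> < 1\<close>, so \<open>|e\<^sub>k| \<le> \<rho>\<^sup>k |e\<^sub>0|\<close>, i.e. the claim holds with \<open>c = 1\<close>.\<close>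

lemma symmetric_matrix_inner_commute:
  fixes A :: "real^'n^'n"
  assumes "transpose A = A"
  shows "(A *v x) \<bullet> y = x \<bullet> (A *v y)"
  by (metis assms dot_lmul_matrix transpose_matrix_vector)

text \<open>Along \<open>v + t (A v)\<close> the form equals \<open>2 t |A v|\<^sup>2 + O(t\<^sup>2)\<close>, which is
  nonnegative for small negative \<open>t\<close> only if \<open>A v = 0\<close>.\<close>
lemma psd_quadratic_form_eq_0_imp_kernel:
  fixes A :: "real^'n^'n"
  assumes sym: "transpose A = A"
    and psd: "\<And>x. 0 \<le> x \<bullet> (A *v x)"
    and zero: "v \<bullet> (A *v v) = 0"
  shows "A *v v = 0"
proof -
  define w where "w = A *v v"
  define c where "c = w \<bullet> (A *v w)"
  have expand: "(v + t *\<^sub>R w) \<bullet> (A *v (v + t *\<^sub>R w)) = 2 * t * (w \<bullet> w) + t^2 * c" for t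
    using zero symmetric_matrix_inner_commute[OF sym, of v w]
    by (simp add: w_def c_def matrix_vector_right_distrib matrix_vector_mult_scaleR
        inner_add_left inner_add_right inner_commute power2_eq_square algebra_simps)
  have "2 * (w \<bullet> w) \<le> 0"
  proof (rule field_le_epsilon)
    fix e :: real
    assume "0 < e"
    define s where "s = e / (c + 1)"
    have "c \<ge> 0" using psd by (simp add: c_def)
    then have s: "s > 0" "s * c \<le> e"
      using \<open>0 < e\<close> by (auto simp: s_def field_simps)
    have "0 \<le> s * (s * c - 2 * (w \<bullet> w))"
      using psd[of "v + (-s) *\<^sub>R w"] unfolding expand by (simp add: power2_eq_square algebra_simps)
    then have "2 * (w \<bullet> w) \<le> s * c"
      using s(1) by (simp add: zero_le_mult_iff)
    then show "2 * (w \<bullet> w) \<le> 0 + e" using s(2) by simp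
  qed
  then have "w \<bullet> w = 0" using inner_ge_zero[of w] by linarith
  then show ?thesis by (simp add: w_def)
qed

text \<open>The minimum \<open>l\<close> of the form on the unit sphere is attained at some \<open>v\<close>; then
  \<open>A - l I\<close> is positive semidefinite with \<open>v\<close> in its kernel.\<close>
lemma symmetric_matrix_min_eigenvalue_exists:
  fixes A :: "real^'n^'n"
  assumes sym: "transpose A = A"
  shows "\<exists>l \<in> real_eigenvalues A. \<forall>x. l * (norm x)^2 \<le> x \<bullet> (A *v x)"
proof -
  define f where "f x = x \<bullet> (A *v x)" for x :: "real^'n"
  have "sphere (0 :: real^'n) 1 \<noteq> {}" by simp
  moreover have "continuous_on (sphere 0 1) f"
    unfolding f_def by (intro continuous_intros linear_continuous_on) (auto intro: linear_linear)
  ultimately obtain v where v: "v \<in> sphere 0 1" and v_min: "\<And>u. u \<in> sphere 0 1 \<Longrightarrow> f v \<le> f u"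
    using continuous_attains_inf[OF compact_sphere] by blast
  define l where "l = f v"
  have lower: "l * (norm x)^2 \<le> f x" for x
  proof (cases "x = 0")
    case False
    have "l \<le> f (x /\<^sub>R norm x)"
      using v_min[of "x /\<^sub>R norm x"] False by (simp add: l_def)
    also have "f (x /\<^sub>R norm x) = f x / (norm x)^2"
      by (simp add: f_def matrix_vector_mult_scaleR power2_eq_square divide_inverse)
    finally show ?thesis using False by (simp add: field_simps)
  qed (simp add: f_def)
  define B where "B = A - l *\<^sub>R mat 1"
  have B_quadratic: "x \<bullet> (B *v x) = f x - l * (norm x)^2" for x
    by (simp add: B_def f_def matrix_vector_mult_diff_rdistrib scaleR_matrix_vector_assoc[symmetric]
        power2_norm_eq_inner inner_diff_right)
  have "transpose B = B"
    using sym by (simp add: B_def transpose_def vec_eq_iff mat_def)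
  moreover have "0 \<le> x \<bullet> (B *v x)" for x
    using lower[of x] by (simp add: B_quadratic)
  moreover have "v \<bullet> (B *v v) = 0"
    using v by (simp add: B_quadratic l_def)
  ultimately have "B *v v = 0"
    by (rule psd_quadratic_form_eq_0_imp_kernel)
  then have "A *v v = l *\<^sub>R v"
    by (simp add: B_def matrix_vector_mult_diff_rdistrib scaleR_matrix_vector_assoc[symmetric])
  moreover have "v \<noteq> 0" using v by auto
  ultimately have "l \<in> real_eigenvalues A"
    unfolding real_eigenvalues_def by blast
  then show ?thesis using lower unfolding f_def by blast
qed

lemma eigenvalue_ge_quadratic_form_bound:
  fixes A :: "real^'n^'n"
  assumes "l \<in> real_eigenvalues A" and "\<And>x. m * (norm x)^2 \<le> x \<bullet> (A *v x)"
  shows "m \<le> l"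
proof -
  obtain v where "v \<noteq> 0" "A *v v = l *\<^sub>R v"
    using assms(1) unfolding real_eigenvalues_def by blast
  then have "m * (norm v)^2 \<le> l * (norm v)^2"
    using assms(2)[of v] by (simp add: power2_norm_eq_inner)
  then show ?thesis using \<open>v \<noteq> 0\<close> by simp
qed

lemma real_eigenvalues_pos:
  fixes A :: "real^'n^'n"
  assumes psd: "\<And>x. 0 \<le> x \<bullet> (A *v x)" and inj: "inj ((*v) A)"
    and "l \<in> real_eigenvalues A"
  shows "0 < l"
proof -
  obtain v where v: "v \<noteq> 0" "A *v v = l *\<^sub>R v"
    using assms(3) unfolding real_eigenvalues_def by blast
  have "0 \<le> l * (norm v)^2"
    using psd[of v] v(2) by (simp add: power2_norm_eq_inner)
  then have "0 \<le> l" using v(1) by (simp add: zero_le_mult_iff)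
  moreover have "l \<noteq> 0"
    using v inj by (metis injD matrix_vector_mult_0_right scaleR_zero_left)
  ultimately show ?thesis by simp
qed

lemma finite_real_eigenvalues_symmetric:
  fixes A :: "real^'n^'n"
  assumes sym: "transpose A = A"
  shows "finite (real_eigenvalues A)"
proof -
  define E where "E = real_eigenvalues A"
  define vec where "vec l = (SOME v. v \<noteq> 0 \<and> A *v v = l *\<^sub>R v)" for l
  have vec: "vec l \<noteq> 0" "A *v vec l = l *\<^sub>R vec l" if "l \<in> E" for l
    using someI_ex[of "\<lambda>v. v \<noteq> 0 \<and> A *v v = l *\<^sub>R v"] that
    unfolding E_def real_eigenvalues_def vec_def by blast+
  have orth: "vec l \<bullet> vec l' = 0" if "l \<in> E" "l' \<in> E" "l \<noteq> l'" for l l'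
  proof -
    have "l * (vec l \<bullet> vec l') = l' * (vec l \<bullet> vec l')"
      using symmetric_matrix_inner_commute[OF sym, of "vec l" "vec l'"] vec that by simp
    then show ?thesis using that(3) by simp
  qed
  have "inj_on vec E"
    by (rule inj_onI) (metis orth vec(1) inner_eq_zero_iff)
  moreover have "independent (vec ` E)"
    by (rule pairwise_orthogonal_independent)
      (auto simp: pairwise_def orthogonal_def vec(1) intro!: orth)
  then have "finite (vec ` E)" by (rule finiteI_independent)
  ultimately show ?thesis using finite_image_iff E_def by blast
qed

lemma lambda_min_symmetric:
  fixes A :: "real^'n^'n"
  assumes sym: "transpose A = A"
  shows lambda_min_in_real_eigenvalues: "lambda_min A \<in> real_eigenvalues A"
    and lambda_min_le_quadratic_form: "lambda_min A * (norm x)^2 \<le> x \<bullet> (A *v x)"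
proof -
  obtain l where l: "l \<in> real_eigenvalues A" and lower: "\<And>x. l * (norm x)^2 \<le> x \<bullet> (A *v x)"
    using symmetric_matrix_min_eigenvalue_exists[OF sym] by blast
  have "lambda_min A = l"
    unfolding lambda_min_def using finite_real_eigenvalues_symmetric[OF sym] l
    by (intro Min_eqI) (auto intro: eigenvalue_ge_quadratic_form_bound lower)
  then show "lambda_min A \<in> real_eigenvalues A" "lambda_min A * (norm x)^2 \<le> x \<bullet> (A *v x)"
    using l lower by auto
qed

lemma uminus_matrix_vector_mult: "(- A) *v x = - (A *v x)" for A :: "real^'n^'m"
  by (simp add: vec_eq_iff matrix_vector_mult_def sum_negf)

lemma real_eigenvalues_uminus: "real_eigenvalues (- A) = uminus ` real_eigenvalues A"
  for A :: "real^'n^'n"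
  unfolding real_eigenvalues_def uminus_matrix_vector_mult
  by (auto simp: image_iff) (metis minus_minus scaleR_minus_left)+

lemma quadratic_form_le_lambda_max:
  fixes A :: "real^'n^'n"
  assumes sym: "transpose A = A"
  shows "x \<bullet> (A *v x) \<le> lambda_max A * (norm x)^2"
proof -
  have sym': "transpose (- A) = - A"
    using sym by (simp add: transpose_def vec_eq_iff)
  have E: "finite (real_eigenvalues A)" "real_eigenvalues A \<noteq> {}"
    using finite_real_eigenvalues_symmetric[OF sym] lambda_min_in_real_eigenvalues[OF sym] by auto
  have "lambda_max A = - lambda_min (- A)"
    using E by (simp add: lambda_max_def lambda_min_def real_eigenvalues_uminus image_image)
  then show ?thesis
    using lambda_min_le_quadratic_form[OF sym', of x] by (simp add: uminus_matrix_vector_mult)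
qed

text \<open>Polarization: with \<open>z = N x\<close>, \<open>p = |z| x\<close> and \<open>r = |x| z\<close> (so \<open>|p| = |r|\<close>),
  \<open>4 p \<bullet> N r = Q(p + r) - Q(p - r) \<le> 2 \<rho> (|p|\<^sup>2 + |r|\<^sup>2)\<close> for the form \<open>Q\<close> of \<open>N\<close>.\<close>
lemma self_adjoint_norm_le:
  fixes N :: "'a::real_inner \<Rightarrow> 'a"
  assumes lin: "linear N" and sym: "\<And>x y. x \<bullet> N y = y \<bullet> N x"
    and bound: "\<And>x. \<bar>x \<bullet> N x\<bar> \<le> \<rho> * (norm x)^2"
  shows "norm (N x) \<le> \<rho> * norm x"
proof (cases "x = 0 \<or> N x = 0")
  case True
  have "0 \<le> \<rho> * (norm x)^2" using bound[of x] by linarith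
  then show ?thesis using True by (auto simp: zero_le_mult_iff linear_0[OF lin])
next
  case False
  define z where "z = N x"
  define p where "p = norm z *\<^sub>R x"
  define r where "r = norm x *\<^sub>R z"
  have "4 * (p \<bullet> N r) = (p + r) \<bullet> N (p + r) - (p - r) \<bullet> N (p - r)"
    using sym[of p r] by (simp add: linear_add[OF lin] linear_diff[OF lin] inner_add_left
        inner_add_right inner_diff_left inner_diff_right algebra_simps)
  also have "\<dots> \<le> \<rho> * (norm (p + r))^2 + \<rho> * (norm (p - r))^2"
    using bound[of "p + r"] bound[of "p - r"] by linarith
  also have "\<dots> = 2 * \<rho> * ((norm p)^2 + (norm r)^2)"
    unfolding power2_norm_eq_inner
    by (simp add: inner_add_left inner_add_right inner_diff_left inner_diff_right
        inner_commute[of r p] algebra_simps)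
  also have "\<dots> = 4 * (norm z * norm x) * (\<rho> * norm z * norm x)"
    by (simp add: p_def r_def power2_eq_square algebra_simps)
  finally have "(norm z * norm x) * (norm z * norm z) \<le> (norm z * norm x) * (\<rho> * norm z * norm x)"
    using sym[of x z] by (simp add: p_def r_def z_def linear_scale[OF lin]
        power2_norm_eq_inner[symmetric] power2_eq_square algebra_simps)
  moreover have "0 < norm z * norm x" using False by (simp add: z_def)
  ultimately have "norm z * norm z \<le> norm z * (\<rho> * norm x)"
    by (metis mult_le_cancel_left_pos mult.assoc mult.commute)
  then show ?thesis using False by (simp add: z_def)
qed

lemma geometric_decay_bound:
  fixes f :: "nat \<Rightarrow> real"
  assumes "0 \<le> \<rho>" and "\<And>k. f (Suc k) \<le> \<rho> * f k"
  shows "f k \<le> \<rho> ^ k * f 0"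
proof (induction k)
  case (Suc k)
  have "f (Suc k) \<le> \<rho> * f k" by (rule assms(2))
  also have "\<dots> \<le> \<rho> * (\<rho> ^ k * f 0)" using Suc assms(1) by (rule mult_left_mono)
  finally show ?case by (simp add: mult.assoc)
qed simp

lemma outer_mult_vec: "outer u v *v x = (v \<bullet> x) *\<^sub>R u" for u v x :: "real^'n"
  by (simp add: vec_eq_iff outer_def matrix_vector_mult_def inner_vec_def
      sum_distrib_left sum_distrib_right mult.assoc mult.commute mult.left_commute)

lemma lambda_max_outer_unit:
  fixes u :: "real^'n"
  assumes "norm u = 1"
  shows "lambda_max (outer u u) = 1"
proof -
  have uu: "u \<bullet> u = 1" using assms by (simp add: power2_norm_eq_inner[symmetric])
  have "1 \<in> real_eigenvalues (outer u u)"
    unfolding real_eigenvalues_def using assms uu by (auto simp: outer_mult_vec intro!: exI[of _ u])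
  moreover have "real_eigenvalues (outer u u) \<subseteq> {0, 1}"
  proof
    fix l assume "l \<in> real_eigenvalues (outer u u)"
    then obtain v where v: "v \<noteq> 0" "(u \<bullet> v) *\<^sub>R u = l *\<^sub>R v"
      unfolding real_eigenvalues_def outer_mult_vec by blast
    have "u \<bullet> v = l * (u \<bullet> v)"
      using arg_cong[OF v(2), of "inner u"] by (simp add: uu)
    moreover have "u \<bullet> v = 0 \<Longrightarrow> l = 0"
      using v by simp
    ultimately show "l \<in> {0, 1}" by auto
  qed
  ultimately show ?thesis
    unfolding lambda_max_def by (intro Max_eqI) (auto intro: finite_subset)
qed

lemma data_matrix_mult_vec:
  "data_matrix P \<sigma> *v x = (\<Sum>m = 1..\<sigma>. (P m \<bullet> x) *\<^sub>R P m)" for x :: "real^'n"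
proof -
  have "data_matrix P \<sigma> *v x = (\<Sum>m = 1..\<sigma>. outer (P m) (P m) *v x)"
    unfolding data_matrix_def
    by (induction \<sigma>) (simp_all add: matrix_vector_mult_add_rdistrib)
  then show ?thesis by (simp add: outer_mult_vec)
qed

lemma transpose_data_matrix: "transpose (data_matrix P \<sigma>) = data_matrix P \<sigma>"
  by (simp add: data_matrix_def transpose_def outer_def vec_eq_iff sum_component mult.commute)

lemma data_matrix_quadratic_form:
  "x \<bullet> (data_matrix P \<sigma> *v x) = (\<Sum>m = 1..\<sigma>. (P m \<bullet> x)^2)" for x :: "real^'n"
  by (simp add: data_matrix_mult_vec inner_sum_right inner_commute power2_eq_square)

lemma lambda_min_data_matrix_pos:
  assumes "rank (data_matrix P \<sigma>) = CARD('n)"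
  shows "0 < lambda_min (data_matrix P \<sigma> :: real^'n^'n)"
proof (rule real_eigenvalues_pos)
  show "0 \<le> x \<bullet> (data_matrix P \<sigma> *v x)" for x :: "real^'n"
    unfolding data_matrix_quadratic_form by (simp add: sum_nonneg)
  show "inj ((*v) (data_matrix P \<sigma>))"
    using assms by (simp add: full_rank_injective[symmetric])
  show "lambda_min (data_matrix P \<sigma>) \<in> real_eigenvalues (data_matrix P \<sigma>)"
    by (rule lambda_min_in_real_eigenvalues[OF transpose_data_matrix])
qed

lemma learning_rate_unit:
  assumes "norm \<phi> = 1"
  shows "learning_rate S \<phi> = lambda_min S / (1 + (lambda_max S)^2)"
  using lambda_max_outer_unit[OF assms] by (simp add: learning_rate_def)

definition cl_error_map :: "real^'n^'n \<Rightarrow> real \<Rightarrow> real^'n \<Rightarrow> real^'n \<Rightarrow> real^'n" where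
  "cl_error_map S \<eta> \<phi> e = e - \<eta> *\<^sub>R (S *v e) - \<eta> *\<^sub>R ((\<phi> \<bullet> e) *\<^sub>R \<phi>)"

definition cl_contraction_rate :: "real \<Rightarrow> real \<Rightarrow> real \<Rightarrow> real" where
  "cl_contraction_rate a b \<eta> = max (1 - \<eta> * a) (\<eta> * (b + 1) - 1)"

lemma cl_step_error:
  assumes "\<And>m. m \<in> {1..\<sigma>} \<Longrightarrow> yr m = \<Theta> \<bullet> Phir m" and "y = \<Theta> \<bullet> \<phi>"
  shows "cl_step Phir yr \<sigma> \<phi> y Th - \<Theta> =
    cl_error_map (data_matrix Phir \<sigma>) (learning_rate (data_matrix Phir \<sigma>) \<phi>) \<phi> (Th - \<Theta>)"
proof -
  have "(\<Sum>m = 1..\<sigma>. (Th \<bullet> Phir m - yr m) *\<^sub>R Phir m) = data_matrix Phir \<sigma> *v (Th - \<Theta>)"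
    unfolding data_matrix_mult_vec
    by (intro sum.cong refl) (simp add: assms(1) inner_diff_right inner_commute)
  moreover have "Th \<bullet> \<phi> - y = \<phi> \<bullet> (Th - \<Theta>)"
    by (simp add: assms(2) inner_diff_right inner_commute)
  ultimately show ?thesis
    by (simp add: cl_step_def cl_error_map_def Let_def)
qed

lemma norm_cl_error_map_le:
  fixes S :: "real^'n^'n"
  assumes sym: "transpose S = S"
    and lower: "\<And>x. a * (norm x)^2 \<le> x \<bullet> (S *v x)"
    and upper: "\<And>x. x \<bullet> (S *v x) \<le> b * (norm x)^2"
    and unit: "norm \<phi> = 1" and "0 \<le> \<eta>"
  shows "norm (cl_error_map S \<eta> \<phi> x) \<le> cl_contraction_rate a b \<eta> * norm x"
proof (rule self_adjoint_norm_le)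
  show "linear (cl_error_map S \<eta> \<phi>)"
    unfolding cl_error_map_def
    by (intro linearI) (simp_all add: matrix_vector_right_distrib matrix_vector_mult_scaleR
        inner_add_right algebra_simps)
  show "x \<bullet> cl_error_map S \<eta> \<phi> y = y \<bullet> cl_error_map S \<eta> \<phi> x" for x y
    using symmetric_matrix_inner_commute[OF sym, of y x]
    by (simp add: cl_error_map_def inner_diff_right inner_commute)
  show "\<bar>x \<bullet> cl_error_map S \<eta> \<phi> x\<bar> \<le> cl_contraction_rate a b \<eta> * (norm x)^2" for x
  proof -
    have form: "x \<bullet> cl_error_map S \<eta> \<phi> x = (norm x)^2 - \<eta> * (x \<bullet> (S *v x)) - \<eta> * (\<phi> \<bullet> x)^2"
      unfolding power2_norm_eq_inner
      by (simp add: cl_error_map_def inner_diff_right inner_commute power2_eq_square)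
    have "\<bar>\<phi> \<bullet> x\<bar> \<le> norm x"
      using Cauchy_Schwarz_ineq2[of \<phi> x] unit by simp
    then have "(\<phi> \<bullet> x)^2 \<le> (norm x)^2"
      by (metis abs_le_square_iff abs_norm_cancel)
    then have "(1 - \<eta> * (b + 1)) * (norm x)^2 \<le> x \<bullet> cl_error_map S \<eta> \<phi> x"
      "x \<bullet> cl_error_map S \<eta> \<phi> x \<le> (1 - \<eta> * a) * (norm x)^2"
      using mult_left_mono[OF lower[of x] \<open>0 \<le> \<eta>\<close>] mult_left_mono[OF upper[of x] \<open>0 \<le> \<eta>\<close>]
        mult_left_mono[OF \<open>(\<phi> \<bullet> x)^2 \<le> (norm x)^2\<close> \<open>0 \<le> \<eta>\<close>]
        mult_nonneg_nonneg[OF \<open>0 \<le> \<eta>\<close> zero_le_power2[of "\<phi> \<bullet> x"]]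
      unfolding form by (simp_all add: algebra_simps)
    moreover have "(1 - \<eta> * a) * (norm x)^2 \<le> cl_contraction_rate a b \<eta> * (norm x)^2"
      "(\<eta> * (b + 1) - 1) * (norm x)^2 \<le> cl_contraction_rate a b \<eta> * (norm x)^2"
      unfolding cl_contraction_rate_def by (simp_all add: mult_right_mono)
    ultimately show ?thesis by (simp add: abs_le_iff algebra_simps)
  qed
qed

lemma cl_contraction_rate_bounds:
  assumes "0 < a" "a \<le> b"
  shows "0 < cl_contraction_rate a b (a / (1 + b^2))"
    and "cl_contraction_rate a b (a / (1 + b^2)) < 1"
proof -
  have "a * a \<le> b * b" using assms by (intro mult_mono) auto
  then have "a / (1 + b^2) * a < 1" by (simp add: field_simps add_pos_nonneg power2_eq_square)
  moreover have "a / (1 + b^2) * (b + 1) < 2"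
  proof -
    have "a * (b + 1) \<le> b * (b + 1)" using assms by (intro mult_right_mono) auto
    also have "\<dots> < 2 * (1 + b^2)"
      using zero_le_power2[of "b - 1/2"] by (simp add: power2_eq_square algebra_simps)
    finally show ?thesis by (simp add: field_simps add_pos_nonneg)
  qed
  moreover have "0 < a / (1 + b^2) * a" using assms(1) by (simp add: add_pos_nonneg)
  ultimately show "0 < cl_contraction_rate a b (a / (1 + b^2))"
    and "cl_contraction_rate a b (a / (1 + b^2)) < 1"
    unfolding cl_contraction_rate_def by auto
qed

theorem theorem1:
  fixes \<Theta> :: "real^7"
    and Phir :: "nat \<Rightarrow> real^7" and yr :: "nat \<Rightarrow> real" and \<sigma> :: nat
    and Phi :: "nat \<Rightarrow> real^7" and y :: "nat \<Rightarrow> real"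
  assumes rec_unit: "\<And>m. m \<in> {1..\<sigma>} \<Longrightarrow> norm (Phir m) = 1"
    and rec_out: "\<And>m. m \<in> {1..\<sigma>} \<Longrightarrow> yr m = \<Theta> \<bullet> Phir m"
    and cur_unit: "\<And>k. norm (Phi k) = 1"
    and cur_out: "\<And>k. y k = \<Theta> \<bullet> Phi k"
    and full_rank: "rank (data_matrix Phir \<sigma>) = 7"
  shows "\<exists>c \<rho>. c \<ge> 1 \<and> 0 < \<rho> \<and> \<rho> < 1 \<and>
           (\<forall>Th :: nat \<Rightarrow> real^7.
              (\<forall>k. Th (Suc k) = cl_step Phir yr \<sigma> (Phi k) (y k) (Th k)) \<longrightarrow>
              (\<forall>k. norm (Th k - \<Theta>) \<le> c * \<rho> ^ k * norm (Th 0 - \<Theta>)))"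
proof -
  define S where "S = data_matrix Phir \<sigma>"
  define a where "a = lambda_min S"
  define b where "b = lambda_max S"
  define \<rho> where "\<rho> = cl_contraction_rate a b (a / (1 + b^2))"
  have sym: "transpose S = S" unfolding S_def by (rule transpose_data_matrix)
  have lower: "a * (norm x)^2 \<le> x \<bullet> (S *v x)" for x
    unfolding a_def by (rule lambda_min_le_quadratic_form[OF sym])
  have upper: "x \<bullet> (S *v x) \<le> b * (norm x)^2" for x
    unfolding b_def by (rule quadratic_form_le_lambda_max[OF sym])
  have "0 < a"
    using full_rank unfolding a_def S_def by (intro lambda_min_data_matrix_pos) simp
  moreover have "a \<le> b"
    using lower[of "axis undefined 1"] upper[of "axis undefined 1"] by simp
  ultimately have \<rho>: "0 < \<rho>" "\<rho> < 1"
    unfolding \<rho>_def by (rule cl_contraction_rate_bounds)+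
  have "norm (Th k - \<Theta>) \<le> \<rho> ^ k * norm (Th 0 - \<Theta>)"
    if cl: "\<forall>k. Th (Suc k) = cl_step Phir yr \<sigma> (Phi k) (y k) (Th k)" for Th k
  proof (rule geometric_decay_bound[where f = "\<lambda>k. norm (Th k - \<Theta>)"])
    show "0 \<le> \<rho>" using \<rho> by simp
    show "norm (Th (Suc k) - \<Theta>) \<le> \<rho> * norm (Th k - \<Theta>)" for k
      using cl cl_step_error[OF rec_out cur_out] norm_cl_error_map_le[OF sym lower upper cur_unit]
        learning_rate_unit[OF cur_unit] \<open>0 < a\<close>
      by (simp add: \<rho>_def S_def a_def b_def)
  qed
  then show ?thesis using \<rho> by (intro exI[of _ 1] exI[of _ \<rho>]) auto
qed

end
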